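(* Let $\alpha\in\mathbb{C}\smallsetminus\{0,1\}$. The irreducible curves of negative self-intersection on $Y_\alpha$ are precisely the exceptional curves $E(0,0)$, $E(1,i)$, $E(\alpha,\alpha i)$, $E(1,-i)$, $E(\alpha,-\alpha i)$ and the strict transforms of the lines $x+iy=0$, $x-iy=0$, $x-z=0$, $(\alpha+1)x+(\alpha-1)iy-2\alpha z=0$, $(\alpha+1)x-(\alpha-1)iy-2\alpha z=0$ and $x-\alpha z=0$.
   Context: $Y_\alpha$ is the blow-up of $\mathbb{P}^2_{\mathbb{C}}$ (coordinates $[x:y:z]$, affine chart $z=1$ with coordinates $(x,y)$) in the five points $(0,0)$, $(1,i)$, $(\alpha,\alpha i)$, $(1,-i)$, $(\alpha,-\alpha i)$; $E(P)$ denotes the exceptional curve over the point $P$. *)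

theory Defs
  imports Complex_Main
begin

text \<open>Plane curves in P^2 over C are given by homogeneous polynomials in x,y,z.
  A polynomial is represented by its coefficient function: f (i,j,k) is the
  coefficient of x^i y^j z^k.\<close>

type_synonym cpoly = "nat \<times> nat \<times> nat \<Rightarrow> complex"

definition homog :: "nat \<Rightarrow> cpoly \<Rightarrow> bool" where
  "homog d f \<longleftrightarrow> (\<forall>i j k. f (i,j,k) \<noteq> 0 \<longrightarrow> i + j + k = d)"

definition pmult :: "cpoly \<Rightarrow> cpoly \<Rightarrow> cpoly" where
  "pmult g h = (\<lambda>(i,j,k). \<Sum>i1\<le>i. \<Sum>j1\<le>j. \<Sum>k1\<le>k.
                   g (i1,j1,k1) * h (i - i1, j - j1, k - k1))"

text \<open>Irreducible homogeneous polynomial of degree d (d \<ge> 1). A factorisation of a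
  homogeneous polynomial has homogeneous factors, and the units of C[x,y,z] are
  the nonzero constants (degree 0).\<close>
definition irred_homog :: "nat \<Rightarrow> cpoly \<Rightarrow> bool" where
  "irred_homog d f \<longleftrightarrow> d \<ge> 1 \<and> homog d f \<and> f \<noteq> (\<lambda>_. 0) \<and>
     \<not> (\<exists>d1 d2 g h. d1 \<ge> 1 \<and> d2 \<ge> 1 \<and> homog d1 g \<and> homog d2 h \<and> f = pmult g h)"

text \<open>Taylor coefficient of u^p v^q in F(u,v) = f(a+u, b+v, 1), for f homogeneous of degree d.\<close>
definition taylor_coeff :: "nat \<Rightarrow> cpoly \<Rightarrow> complex \<times> complex \<Rightarrow> nat \<Rightarrow> nat \<Rightarrow> complex" where
  "taylor_coeff d f P p q = (case P of (a,b) \<Rightarrow>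
     \<Sum>i\<le>d. \<Sum>j\<le>d - i. f (i, j, d - i - j) * of_nat (i choose p) * of_nat (j choose q)
                        * a ^ (i - p) * b ^ (j - q))"

text \<open>Multiplicity of the curve f = 0 at the affine point P = (a,b) = [a:b:1]:
  the lowest total degree of a nonzero term of f(a+u,b+v,1).\<close>
definition mult_at :: "nat \<Rightarrow> cpoly \<Rightarrow> complex \<times> complex \<Rightarrow> nat" where
  "mult_at d f P = (LEAST m. \<exists>p q. p + q = m \<and> taylor_coeff d f P p q \<noteq> 0)"

definition bpts :: "complex \<Rightarrow> (complex \<times> complex) list" where
  "bpts \<alpha> = [(0,0), (1,\<i>), (\<alpha>, \<alpha>*\<i>), (1,-\<i>), (\<alpha>, -\<alpha>*\<i>)]"

text \<open>Curves on Y_alpha: an exceptional curve E(P), or the strict transform of the plane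
  curve f = 0 (f homogeneous of degree d).\<close>
datatype curveY = Exc "complex \<times> complex" | Strict nat cpoly

definition irreducible_curveY :: "complex \<Rightarrow> curveY \<Rightarrow> bool" where
  "irreducible_curveY \<alpha> C = (case C of
      Exc P \<Rightarrow> P \<in> set (bpts \<alpha>)
    | Strict d f \<Rightarrow> irred_homog d f)"

definition selfint :: "complex \<Rightarrow> curveY \<Rightarrow> int" where
  "selfint \<alpha> C = (case C of
      Exc P \<Rightarrow> -1
    | Strict d f \<Rightarrow> int d ^ 2 - (\<Sum>P\<leftarrow>bpts \<alpha>. int (mult_at d f P) ^ 2))"

definition lin :: "complex \<Rightarrow> complex \<Rightarrow> complex \<Rightarrow> cpoly" where
  "lin a b c = (\<lambda>t. if t = (1,0,0) then a else if t = (0,1,0) then b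
                    else if t = (0,0,1) then c else 0)"

definition listed_lines :: "complex \<Rightarrow> cpoly list" where
  "listed_lines \<alpha> =
     [lin 1 \<i> 0, lin 1 (-\<i>) 0, lin 1 0 (-1),
      lin (\<alpha>+1) ((\<alpha>-1)*\<i>) (-2*\<alpha>), lin (\<alpha>+1) (-(\<alpha>-1)*\<i>) (-2*\<alpha>),
      lin 1 0 (-\<alpha>)]"

end

theory Submission
  imports Defs "HOL-Computational_Algebra.Polynomial"
begin

text \<open>For the strict transform of an
  irreducible curve \<open>f = 0\<close> of degree \<open>d\<close> we bound the multiplicities by Bezout's theorem
  for lines: restricting \<open>f\<close> to a line gives a univariate polynomial of degree at most \<open>d\<close>
  whose root at each point has order at least the multiplicity of the curve there, and this
  polynomial is nonzero unless the line is a component of the curve, which irreducibility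
  excludes for \<open>d \<ge> 2\<close>. Applied to the two triples \<open>(0,0), (1,\<plusminus>i), (\<alpha>,\<plusminus>\<alpha> i)\<close> on the
  lines \<open>y = \<plusminus>i x\<close> and to the four pairs joining one triple to the other, this gives linear
  bounds on the multiplicities that force \<open>\<Sum> m\<^sub>P\<^sup>2 \<le> d\<^sup>2\<close>. A line has multiplicity one at
  each point it contains, so its strict transform is negative exactly when it passes through
  two of the five points, and the ten pairs span precisely the six listed lines.\<close>

section \<open>Bezout's bound on a line\<close>

definition affine_eval :: "nat \<Rightarrow> cpoly \<Rightarrow> complex \<times> complex \<Rightarrow> complex" where
  "affine_eval d f P = (\<Sum>i\<le>d. \<Sum>j\<le>d. f (i, j, d - i - j) * fst P ^ i * snd P ^ j)"

lemma homog_coeff_eq_0: "homog d f \<Longrightarrow> d < i + j \<Longrightarrow> f (i, j, d - i - j) = 0"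
  unfolding homog_def by fastforce

lemma taylor_coeff_homog:
  assumes "homog d f"
  shows "taylor_coeff d f (a, b) p q =
    (\<Sum>i\<le>d. \<Sum>j\<le>d. f (i, j, d - i - j) * of_nat (i choose p) * of_nat (j choose q)
                      * a ^ (i - p) * b ^ (j - q))"
  unfolding taylor_coeff_def prod.case
  by (rule sum.cong[OF refl], rule sum.mono_neutral_left) (use homog_coeff_eq_0[OF assms] in auto)

lemma binomial_ring_atMost:
  fixes a u :: "'a::comm_semiring_1"
  assumes "i \<le> d"
  shows "(a + u) ^ i = (\<Sum>p\<le>d. of_nat (i choose p) * u ^ p * a ^ (i - p))"
  unfolding add.commute[of a] binomial_ring
  by (rule sum.mono_neutral_left) (use assms in \<open>auto simp: binomial_eq_0\<close>)

lemma affine_eval_taylor: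
  assumes "homog d f"
  shows "affine_eval d f (a + u, b + v) =
    (\<Sum>p\<le>d. \<Sum>q\<le>d. taylor_coeff d f (a, b) p q * u ^ p * v ^ q)"
proof -
  let ?t = "\<lambda>i j p q. f (i, j, d - i - j) * of_nat (i choose p) * of_nat (j choose q)
                        * a ^ (i - p) * b ^ (j - q) * u ^ p * v ^ q"
  have "affine_eval d f (a + u, b + v) = (\<Sum>i\<le>d. \<Sum>j\<le>d. \<Sum>p\<le>d. \<Sum>q\<le>d. ?t i j p q)"
    by (simp add: affine_eval_def binomial_ring_atMost sum_distrib_left sum_distrib_right mult_ac)
  also have "\<dots> = (\<Sum>i\<le>d. \<Sum>p\<le>d. \<Sum>j\<le>d. \<Sum>q\<le>d. ?t i j p q)"
    by (rule sum.cong[OF refl], rule sum.swap)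
  also have "\<dots> = (\<Sum>p\<le>d. \<Sum>i\<le>d. \<Sum>q\<le>d. \<Sum>j\<le>d. ?t i j p q)"
    by (subst sum.swap) (rule sum.cong[OF refl], rule sum.cong[OF refl], rule sum.swap)
  also have "\<dots> = (\<Sum>p\<le>d. \<Sum>q\<le>d. \<Sum>i\<le>d. \<Sum>j\<le>d. ?t i j p q)"
    by (rule sum.cong[OF refl], rule sum.swap)
  also have "\<dots> = (\<Sum>p\<le>d. \<Sum>q\<le>d. taylor_coeff d f (a, b) p q * u ^ p * v ^ q)"
    by (simp add: taylor_coeff_homog[OF assms] sum_distrib_right)
  finally show ?thesis .
qed

definition line_restriction ::
    "nat \<Rightarrow> cpoly \<Rightarrow> complex \<times> complex \<Rightarrow> complex \<times> complex \<Rightarrow> complex poly" where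
  "line_restriction d f P V = (\<Sum>i\<le>d. \<Sum>j\<le>d.
     smult (f (i, j, d - i - j)) ([:fst P, fst V:] ^ i * [:snd P, snd V:] ^ j))"

lemma poly_line_restriction:
  "poly (line_restriction d f (x0, y0) (v1, v2)) t = affine_eval d f (x0 + t * v1, y0 + t * v2)"
  unfolding line_restriction_def affine_eval_def by (simp add: poly_sum mult_ac)

lemma degree_line_restriction_le:
  assumes "homog d f"
  shows "degree (line_restriction d f P V) \<le> d"
  unfolding line_restriction_def
proof (intro degree_sum_le finite_atMost)
  fix i j
  show "degree (smult (f (i, j, d - i - j)) ([:fst P, fst V:] ^ i * [:snd P, snd V:] ^ j)) \<le> d"
  proof (cases "i + j \<le> d")
    case True
    have "degree ([:fst P, fst V:] ^ i * [:snd P, snd V:] ^ j) \<le> i + j"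
      by (rule order.trans[OF degree_mult_le add_mono])
         (auto intro: order.trans[OF degree_power_le])
    with True show ?thesis by (simp add: order.trans[OF degree_smult_le])
  qed (use homog_coeff_eq_0[OF assms, of i j] in simp)
qed

lemma line_restriction_taylor:
  assumes "homog d f"
  shows "line_restriction d f (x0, y0) (v1, v2) =
    (\<Sum>p\<le>d. \<Sum>q\<le>d. smult (taylor_coeff d f (x0 + t0 * v1, y0 + t0 * v2) p q)
                          ([:-t0 * v1, v1:] ^ p * [:-t0 * v2, v2:] ^ q))"
proof (rule poly_ext)
  fix t
  have linear: "poly [:-t0 * v, v:] t = (t - t0) * v" for v by (simp add: algebra_simps)
  have "poly (line_restriction d f (x0, y0) (v1, v2)) t =
      affine_eval d f ((x0 + t0 * v1) + (t - t0) * v1, (y0 + t0 * v2) + (t - t0) * v2)"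
    unfolding poly_line_restriction by (simp add: algebra_simps)
  also have "\<dots> = (\<Sum>p\<le>d. \<Sum>q\<le>d. taylor_coeff d f (x0 + t0 * v1, y0 + t0 * v2) p q
                                * ((t - t0) * v1) ^ p * ((t - t0) * v2) ^ q)"
    by (rule affine_eval_taylor[OF assms])
  finally show "poly (line_restriction d f (x0, y0) (v1, v2)) t = poly (\<Sum>p\<le>d. \<Sum>q\<le>d.
      smult (taylor_coeff d f (x0 + t0 * v1, y0 + t0 * v2) p q)
            ([:-t0 * v1, v1:] ^ p * [:-t0 * v2, v2:] ^ q)) t"
    by (simp only: poly_sum poly_smult poly_mult poly_power linear mult.assoc)
qed

lemma taylor_coeff_eq_0_below_mult_at:
  "p + q < mult_at d f P \<Longrightarrow> taylor_coeff d f P p q = 0"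
  unfolding mult_at_def using not_less_Least by blast

lemma mult_at_le_order_line_restriction:
  assumes "homog d f" and "line_restriction d f (x0, y0) (v1, v2) \<noteq> 0"
  shows "mult_at d f (x0 + t0 * v1, y0 + t0 * v2)
           \<le> order t0 (line_restriction d f (x0, y0) (v1, v2))"
proof -
  let ?m = "mult_at d f (x0 + t0 * v1, y0 + t0 * v2)"
  have linear_dvd: "[:-t0, 1:] ^ p dvd [:-t0 * v, v:] ^ p" for p v
    using smult_power[of v "[:-t0, 1:]" p] by (simp add: mult.commute dvd_smult)
  have "[:-t0, 1:] ^ ?m dvd smult (taylor_coeff d f (x0 + t0 * v1, y0 + t0 * v2) p q)
                                 ([:-t0 * v1, v1:] ^ p * [:-t0 * v2, v2:] ^ q)" for p q
  proof (cases "p + q < ?m")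
    case False
    then have "[:-t0, 1:] ^ ?m dvd [:-t0, 1:] ^ p * [:-t0, 1:] ^ q"
      by (simp add: le_imp_power_dvd flip: power_add)
    also have "\<dots> dvd [:-t0 * v1, v1:] ^ p * [:-t0 * v2, v2:] ^ q"
      by (intro mult_dvd_mono linear_dvd)
    finally show ?thesis by (rule dvd_smult)
  qed (simp add: taylor_coeff_eq_0_below_mult_at)
  then have "[:-t0, 1:] ^ ?m dvd line_restriction d f (x0, y0) (v1, v2)"
    unfolding line_restriction_taylor[OF assms(1), of x0 y0 v1 v2 t0] by (intro dvd_sum)
  with assms(2) show ?thesis by (simp add: order_divides)
qed

lemma sum_mult_at_on_line_le:
  assumes "homog d f" and "line_restriction d f (x0, y0) (v1, v2) \<noteq> 0" and "finite S"
  shows "(\<Sum>t\<in>S. mult_at d f (x0 + t * v1, y0 + t * v2)) \<le> d"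
proof -
  let ?g = "line_restriction d f (x0, y0) (v1, v2)"
  have "(\<Sum>t\<in>S. mult_at d f (x0 + t * v1, y0 + t * v2)) \<le> (\<Sum>t\<in>S. order t ?g)"
    by (intro sum_mono mult_at_le_order_line_restriction assms)
  also have "\<dots> = (\<Sum>t\<in>S \<inter> {t. poly ?g t = 0}. order t ?g)"
    by (rule sum.mono_neutral_right) (use assms in \<open>auto simp: order_root\<close>)
  also have "\<dots> \<le> (\<Sum>t | poly ?g t = 0. order t ?g)"
    by (rule sum_mono2) (use assms(2) poly_roots_finite in auto)
  also have "\<dots> \<le> degree ?g" by (rule sum_order_le_degree[OF assms(2)])
  also have "\<dots> \<le> d" by (rule degree_line_restriction_le[OF assms(1)])
  finally show ?thesis .
qed

section \<open>Curves containing a line\<close>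

lemma homog_lin: "homog 1 (lin a b c)"
  unfolding homog_def lin_def by auto

lemma pmult_lin:
  "pmult (lin a b c) h (i, j, k) = (if 0 < i then a * h (i - 1, j, k) else 0)
     + (if 0 < j then b * h (i, j - 1, k) else 0) + (if 0 < k then c * h (i, j, k - 1) else 0)"
proof -
  have "pmult (lin a b c) h (i, j, k) =
      (\<Sum>t\<in>{..i} \<times> {..j} \<times> {..k}. (if t = (1, 0, 0) then a * h (i - 1, j, k) else 0)
        + (if t = (0, 1, 0) then b * h (i, j - 1, k) else 0)
        + (if t = (0, 0, 1) then c * h (i, j, k - 1) else 0))"
    unfolding pmult_def prod.case sum.cartesian_product
    by (rule sum.cong[OF refl]) (simp add: lin_def split: prod.split)
  then show ?thesis by (simp add: sum.distrib)
qed

text \<open>\<open>f(x, y, 1)\<close> as a polynomial in \<open>x\<close> with coefficients in \<open>\<complex>[y]\<close>.\<close>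
definition affine_poly :: "nat \<Rightarrow> cpoly \<Rightarrow> complex poly poly" where
  "affine_poly d f = (\<Sum>i\<le>d. monom (\<Sum>j\<le>d. monom (f (i, j, d - i - j)) j) i)"

lemma coeff_affine_poly:
  "coeff (coeff (affine_poly d f) i) j = (if i \<le> d \<and> j \<le> d then f (i, j, d - i - j) else 0)"
  unfolding affine_poly_def coeff_sum coeff_monom
  by (simp add: coeff_sum if_distrib[of "\<lambda>p. coeff p j"] cong: if_cong)

lemma poly_affine_poly: "poly (poly (affine_poly d f) [:\<gamma>, \<beta>:]) y = affine_eval d f (\<beta> * y + \<gamma>, y)"
  unfolding affine_poly_def affine_eval_def
  by (simp add: poly_sum poly_monom sum_distrib_left sum_distrib_right mult_ac add.commute)

lemma degree_affine_poly_le: "degree (affine_poly d f) \<le> d"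
  by (rule degree_le) (auto intro: poly_eqI simp: coeff_affine_poly)

lemma coeff_coeff_linear_mult:
  fixes Q :: "'a::comm_ring_1 poly poly"
  shows "coeff (coeff ([:-[:\<gamma>, \<beta>:], 1:] * Q) i) j =
     (if i = 0 then 0 else coeff (coeff Q (i - 1)) j) - \<gamma> * coeff (coeff Q i) j
     - (if j = 0 then 0 else \<beta> * coeff (coeff Q i) (j - 1))"
proof -
  have "[:-[:\<gamma>, \<beta>:], 1:] * Q = smult (-[:\<gamma>, \<beta>:]) Q + pCons 0 Q"
    by simp
  moreover have "[:\<gamma>, \<beta>:] * q = smult \<gamma> q + pCons 0 (smult \<beta> q)" for q :: "'a poly"
    by simp
  ultimately show ?thesis by (cases i; cases j) (simp_all add: coeff_pCons)
qed

text \<open>The quotient of \<open>f\<close> by \<open>x - (\<beta> y + \<gamma>)\<close> has total degree below \<open>d\<close>, so it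
  homogenises to a form of degree \<open>d - 1\<close>.\<close>
lemma affine_poly_quotient_coeff_eq_0:
  assumes "homog d f" and quotient: "affine_poly d f = [:-[:\<gamma>, \<beta>:], 1:] * Q" and "d \<le> i + j"
  shows "coeff (coeff Q i) j = 0"
  using assms(3)
proof (induction "d - i" arbitrary: i j)
  case 0
  show ?case
  proof (cases "Q = 0")
    case False
    have "degree (affine_poly d f) = Suc (degree Q)"
      unfolding quotient using False by (subst degree_mult_eq) auto
    with degree_affine_poly_le[of d f] 0 show ?thesis by (simp add: coeff_eq_0)
  qed simp
next
  case (Suc n)
  have "coeff (coeff (affine_poly d f) (Suc i)) j = 0"
    using Suc.prems homog_coeff_eq_0[OF assms(1), of "Suc i" j] by (simp add: coeff_affine_poly)
  moreover have "coeff (coeff Q (Suc i)) j' = 0" if "d \<le> Suc i + j'" for j'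
    using Suc.hyps(1)[of "Suc i" j'] Suc.hyps(2) that by simp
  ultimately show ?case
    using Suc.prems coeff_coeff_linear_mult[of \<gamma> \<beta> Q "Suc i" j]
    by (cases j) (simp_all add: quotient)
qed

lemma linear_factor_if_vanishes_on_line:
  assumes hf: "homog d f" and "d \<ge> 1" and vanishes: "\<And>y. affine_eval d f (\<beta> * y + \<gamma>, y) = 0"
  obtains h where "homog (d - 1) h" and "f = pmult (lin 1 (-\<beta>) (-\<gamma>)) h"
proof -
  have "poly (affine_poly d f) [:\<gamma>, \<beta>:] = 0"
    using vanishes by (simp flip: poly_all_0_iff_0 add: poly_affine_poly)
  then obtain Q where quotient: "affine_poly d f = [:-[:\<gamma>, \<beta>:], 1:] * Q"
    by (auto simp: poly_eq_0_iff_dvd)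
  define q where "q i j = coeff (coeff Q i) j" for i j
  have q_high: "q i j = 0" if "d \<le> i + j" for i j
    unfolding q_def using affine_poly_quotient_coeff_eq_0[OF hf quotient that] .
  define h where "h = (\<lambda>(i, j, k). if i + j + k = d - 1 then q i j else 0)"
  have "f = pmult (lin 1 (-\<beta>) (-\<gamma>)) h"
  proof (rule ext, clarify)
    fix i j k
    show "f (i, j, k) = pmult (lin 1 (-\<beta>) (-\<gamma>)) h (i, j, k)"
    proof (cases "i + j + k = d")
      case True
      then have "k = d - i - j" by simp
      then have "f (i, j, k) = coeff (coeff (affine_poly d f) i) j"
        using True by (simp add: coeff_affine_poly)
      also have "\<dots> = (if i = 0 then 0 else q (i - 1) j) - \<gamma> * q i j
                       - (if j = 0 then 0 else \<beta> * q i (j - 1))"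
        unfolding quotient q_def by (rule coeff_coeff_linear_mult)
      also have "\<dots> = pmult (lin 1 (-\<beta>) (-\<gamma>)) h (i, j, k)"
        using True \<open>d \<ge> 1\<close> q_high[of i j] by (cases k) (auto simp: pmult_lin h_def)
      finally show ?thesis .
    next
      case False
      with \<open>d \<ge> 1\<close> have "0 < i \<Longrightarrow> h (i - 1, j, k) = 0" "0 < j \<Longrightarrow> h (i, j - 1, k) = 0"
        "0 < k \<Longrightarrow> h (i, j, k - 1) = 0"
        by (auto simp: h_def)
      moreover have "f (i, j, k) = 0" using hf False by (auto simp: homog_def)
      ultimately show ?thesis by (simp add: pmult_lin cong: if_cong)
    qed
  qed
  moreover have "homog (d - 1) h" unfolding homog_def h_def by auto
  ultimately show thesis using that by blast
qed

definition swap_xy :: "cpoly \<Rightarrow> cpoly" where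
  "swap_xy f = (\<lambda>(i, j, k). f (j, i, k))"

lemma swap_xy_apply [simp]: "swap_xy f (i, j, k) = f (j, i, k)"
  by (simp add: swap_xy_def)

lemma swap_xy_swap_xy [simp]: "swap_xy (swap_xy f) = f"
  by (auto simp: swap_xy_def)

lemma homog_swap_xy [simp]: "homog d (swap_xy f) \<longleftrightarrow> homog d f"
  unfolding homog_def by (metis add.commute swap_xy_apply)

lemma swap_xy_lin: "swap_xy (lin a b c) = lin b a c"
  by (auto simp: swap_xy_def lin_def)

lemma swap_xy_pmult: "swap_xy (pmult g h) = pmult (swap_xy g) (swap_xy h)"
proof (rule ext, clarify)
  fix i j k
  show "swap_xy (pmult g h) (i, j, k) = pmult (swap_xy g) (swap_xy h) (i, j, k)"
    unfolding swap_xy_apply pmult_def by (simp add: sum.swap[of _ "{..i}"])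
qed

lemma affine_eval_swap_xy: "affine_eval d (swap_xy f) (x, y) = affine_eval d f (y, x)"
  unfolding affine_eval_def swap_xy_apply fst_conv snd_conv
  by (subst sum.swap) (simp add: mult_ac add.commute)

lemma line_restriction_nonzero:
  assumes irred: "irred_homog d f" and "d \<ge> 2" and "(v1, v2) \<noteq> (0, 0)"
  shows "line_restriction d f (x0, y0) (v1, v2) \<noteq> 0"
proof
  assume "line_restriction d f (x0, y0) (v1, v2) = 0"
  then have vanishes: "affine_eval d f (x0 + t * v1, y0 + t * v2) = 0" for t
    by (metis poly_0 poly_line_restriction)
  have hf: "homog d f" and "d \<ge> 1" using irred \<open>d \<ge> 2\<close> by (auto simp: irred_homog_def)
  obtain g h where "homog 1 g" and "homog (d - 1) h" and "f = pmult g h"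
  proof (cases "v2 = 0")
    case False
    have "affine_eval d f (v1 / v2 * y + (x0 - y0 * v1 / v2), y) = 0" for y
      using vanishes[of "(y - y0) / v2"] False by (simp add: field_simps)
    then obtain h where "homog (d - 1) h"
      and "f = pmult (lin 1 (-(v1 / v2)) (-(x0 - y0 * v1 / v2))) h"
      by (rule linear_factor_if_vanishes_on_line[OF hf \<open>d \<ge> 1\<close>])
    then show thesis by (intro that[OF homog_lin])
  next
    case True
    \<comment> \<open>a horizontal line: exchange the roles of \<open>x\<close> and \<open>y\<close>\<close>
    with assms(3) have "v1 \<noteq> 0" by simp
    have "affine_eval d (swap_xy f) (0 * x + y0, x) = 0" for x
      using vanishes[of "(x - x0) / v1"] True \<open>v1 \<noteq> 0\<close> by (simp add: affine_eval_swap_xy)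
    then obtain h where "homog (d - 1) h" and "swap_xy f = pmult (lin 1 0 (-y0)) h"
      using linear_factor_if_vanishes_on_line[of d "swap_xy f" 0 y0] hf \<open>d \<ge> 1\<close> by auto
    then have "f = pmult (lin 0 1 (-y0)) (swap_xy h)"
      by (metis swap_xy_swap_xy swap_xy_pmult swap_xy_lin)
    with \<open>homog (d - 1) h\<close> show thesis by (intro that[OF homog_lin]) simp_all
  qed
  moreover have "d - 1 \<ge> 1" using \<open>d \<ge> 2\<close> by simp
  ultimately show False using irred unfolding irred_homog_def by blast
qed

section \<open>Irreducible curves of degree at least two\<close>

lemma sum_mult_at_on_line_le_irred:
  assumes "irred_homog d f" and "d \<ge> 2" and "(v1, v2) \<noteq> (0, 0)" and "finite S"
  shows "(\<Sum>t\<in>S. mult_at d f (x0 + t * v1, y0 + t * v2)) \<le> d"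
  using assms
  by (intro sum_mult_at_on_line_le line_restriction_nonzero) (auto simp: irred_homog_def)

lemma mult_at_two_points_le:
  assumes "irred_homog d f" and "d \<ge> 2" and "P \<noteq> Q"
  shows "mult_at d f P + mult_at d f Q \<le> d"
proof -
  obtain x1 y1 x2 y2 where P: "P = (x1, y1)" and Q: "Q = (x2, y2)" by fastforce
  have "(\<Sum>t\<in>{0, 1}. mult_at d f (x1 + t * (x2 - x1), y1 + t * (y2 - y1))) \<le> d"
    using assms P Q by (intro sum_mult_at_on_line_le_irred) auto
  then show ?thesis using P Q by simp
qed

lemma mult_at_three_collinear_le:
  assumes "irred_homog d f" and "d \<ge> 2" and "(v1, v2) \<noteq> (0, 0)" and "s \<noteq> 0" and "s \<noteq> 1"
  shows "mult_at d f (x0, y0) + mult_at d f (x0 + v1, y0 + v2)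
           + mult_at d f (x0 + s * v1, y0 + s * v2) \<le> d"
proof -
  have "(\<Sum>t\<in>{0, 1, s}. mult_at d f (x0 + t * v1, y0 + t * v2)) \<le> d"
    using assms by (intro sum_mult_at_on_line_le_irred) auto
  with assms(4,5) show ?thesis by (simp add: add.assoc)
qed

lemma five_squares_le_square:
  fixes s a b c e d :: int
  assumes "0 \<le> s" "0 \<le> a" "0 \<le> b" "0 \<le> c" "0 \<le> e"
    and "s + a + b \<le> d" and "s + c + e \<le> d"
    and "a + c \<le> d" "a + e \<le> d" "b + c \<le> d" "b + e \<le> d"
  shows "s\<^sup>2 + a\<^sup>2 + b\<^sup>2 + c\<^sup>2 + e\<^sup>2 \<le> d\<^sup>2"
proof -
  define A where "A = max a b"
  define B where "B = max c e"
  have "A + B \<le> d" "0 \<le> A" "0 \<le> B" using assms by (auto simp: A_def B_def)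
  have "a * a \<le> A * a" "b * b \<le> A * b" "c * c \<le> B * c" "e * e \<le> B * e"
    using assms by (auto simp: A_def B_def intro!: mult_right_mono)
  then have "a\<^sup>2 + b\<^sup>2 \<le> A * (a + b)" "c\<^sup>2 + e\<^sup>2 \<le> B * (c + e)"
    by (simp_all add: power2_eq_square distrib_left add_mono)
  moreover have "A * (a + b) + B * (c + e) \<le> (A + B) * (d - s)"
    using \<open>0 \<le> A\<close> \<open>0 \<le> B\<close> assms by (simp add: distrib_right mult_left_mono add_mono)
  moreover have "(A + B) * (d - s) \<le> d * (d - s)"
    using \<open>A + B \<le> d\<close> assms by (intro mult_right_mono) auto
  moreover have "s\<^sup>2 \<le> d * s" using assms by (simp add: power2_eq_square mult_right_mono)
  ultimately show ?thesis by (simp add: power2_eq_square algebra_simps)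
qed

lemma selfint_nonneg_if_degree_ge_2:
  assumes "\<alpha> \<noteq> 0" and "\<alpha> \<noteq> 1" and irred: "irred_homog d f" and "d \<ge> 2"
  shows "selfint \<alpha> (Strict d f) \<ge> 0"
proof -
  let ?m = "mult_at d f"
  have "?m (0, 0) + ?m (1, \<i>) + ?m (\<alpha>, \<alpha> * \<i>) \<le> d"
    using mult_at_three_collinear_le[OF irred \<open>d \<ge> 2\<close>, of 1 \<i> \<alpha> 0 0] assms by simp
  moreover have "?m (0, 0) + ?m (1, -\<i>) + ?m (\<alpha>, -\<alpha> * \<i>) \<le> d"
    using mult_at_three_collinear_le[OF irred \<open>d \<ge> 2\<close>, of 1 "-\<i>" \<alpha> 0 0] assms by simp
  moreover have "?m P + ?m Q \<le> d" if "P \<noteq> Q" for P Q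
    using mult_at_two_points_le[OF irred \<open>d \<ge> 2\<close> that] .
  moreover have "(1, \<i>) \<noteq> (1, -\<i>)" "(\<alpha>, \<alpha> * \<i>) \<noteq> (\<alpha>, -\<alpha> * \<i>)"
    "(1, \<i>) \<noteq> (\<alpha>, -\<alpha> * \<i>)" "(\<alpha>, \<alpha> * \<i>) \<noteq> (1, -\<i>)"
    using assms by (auto simp: complex_eq_iff)
  ultimately have "(int (?m (0, 0)))\<^sup>2 + (int (?m (1, \<i>)))\<^sup>2 + (int (?m (\<alpha>, \<alpha> * \<i>)))\<^sup>2
      + (int (?m (1, -\<i>)))\<^sup>2 + (int (?m (\<alpha>, -\<alpha> * \<i>)))\<^sup>2 \<le> (int d)\<^sup>2"
    by (intro five_squares_le_square) (simp_all flip: of_nat_add)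
  then show ?thesis by (simp add: selfint_def bpts_def)
qed

section \<open>Lines\<close>

lemma homog_1_eq_lin:
  assumes "homog 1 f"
  shows "f = lin (f (1, 0, 0)) (f (0, 1, 0)) (f (0, 0, 1))"
proof (rule ext, clarify)
  fix i j k
  show "f (i, j, k) = lin (f (1, 0, 0)) (f (0, 1, 0)) (f (0, 0, 1)) (i, j, k)"
  proof (cases "i + j + k = 1")
    case True
    then have "(i, j, k) \<in> {(1, 0, 0), (0, 1, 0), (0, 0, 1)}" by auto
    then show ?thesis by (auto simp: lin_def)
  next
    case False
    then show ?thesis using assms by (auto simp: homog_def lin_def)
  qed
qed

lemma lin_eq_0_iff: "lin a b c = (\<lambda>_. 0) \<longleftrightarrow> (a, b, c) = (0, 0, 0)"
  by (auto simp: lin_def fun_eq_iff)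

lemma lin_eq_lin_iff: "lin a b c = lin a' b' c' \<longleftrightarrow> (a, b, c) = (a', b', c')"
  by (auto simp: lin_def fun_eq_iff)

lemma mult_lin: "(\<lambda>t. k * lin a b c t) = lin (k * a) (k * b) (k * c)"
  by (simp add: lin_def fun_eq_iff)

lemma affine_eval_lin: "affine_eval 1 (lin a b c) P = a * fst P + b * snd P + c"
  by (simp add: affine_eval_def lin_def atMost_Suc)

lemma taylor_coeff_lin:
  "taylor_coeff 1 (lin a b c) P 0 0 = a * fst P + b * snd P + c"
  "taylor_coeff 1 (lin a b c) P 1 0 = a"
  "taylor_coeff 1 (lin a b c) P 0 1 = b"
  by (auto simp: taylor_coeff_def lin_def atMost_Suc split: prod.split)

lemma mult_at_lin:
  assumes "(a, b, c) \<noteq> (0, 0, 0)"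
  shows "mult_at 1 (lin a b c) P = (if affine_eval 1 (lin a b c) P = 0 then 1 else 0)"
proof (cases "affine_eval 1 (lin a b c) P = 0")
  case True
  with assms have "a \<noteq> 0 \<or> b \<noteq> 0" unfolding affine_eval_lin by auto
  then have "\<exists>p q. p + q = 1 \<and> taylor_coeff 1 (lin a b c) P p q \<noteq> 0"
    by (metis taylor_coeff_lin(2,3) add_0 add_0_right)
  moreover have "1 \<le> m" if "\<exists>p q. p + q = m \<and> taylor_coeff 1 (lin a b c) P p q \<noteq> 0" for m
    using that True taylor_coeff_lin(1) unfolding affine_eval_lin by (cases m) auto
  ultimately show ?thesis using True unfolding mult_at_def by (intro Least_equality) auto
next
  case False
  then show ?thesis
    using taylor_coeff_lin(1) unfolding mult_at_def affine_eval_lin by (intro Least_equality) auto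
qed

lemma homog_pmult:
  assumes "homog d1 g" and "homog d2 h"
  shows "homog (d1 + d2) (pmult g h)"
  unfolding homog_def
proof (intro allI impI)
  fix i j k
  assume "pmult g h (i, j, k) \<noteq> 0"
  then obtain i1 j1 k1 where "i1 \<le> i" "j1 \<le> j" "k1 \<le> k"
    and "g (i1, j1, k1) \<noteq> 0" "h (i - i1, j - j1, k - k1) \<noteq> 0"
    unfolding pmult_def by (auto elim!: sum.not_neutral_contains_not_neutral)
  with assms show "i + j + k = d1 + d2" unfolding homog_def by fastforce
qed

lemma homog_unique_degree: "homog d f \<Longrightarrow> homog e f \<Longrightarrow> f \<noteq> (\<lambda>_. 0) \<Longrightarrow> d = e"
  unfolding homog_def by fastforce

lemma irred_homog_1: "homog 1 f \<Longrightarrow> f \<noteq> (\<lambda>_. 0) \<Longrightarrow> irred_homog 1 f"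
  unfolding irred_homog_def using homog_pmult homog_unique_degree by fastforce

lemma lin_through_two_points:
  assumes "P \<noteq> Q" and "affine_eval 1 (lin a b c) P = 0" and "affine_eval 1 (lin a b c) Q = 0"
  obtains k where "lin a b c = lin (k * (snd P - snd Q)) (k * (fst Q - fst P))
                                  (k * (fst P * snd Q - fst Q * snd P))"
proof -
  obtain x1 y1 x2 y2 where P: "P = (x1, y1)" and Q: "Q = (x2, y2)" by fastforce
  have on_line: "a * x1 + b * y1 + c = 0" "a * x2 + b * y2 + c = 0"
    using assms(2,3) unfolding affine_eval_lin by (simp_all add: P Q)
  then have cross: "a * (x2 - x1) = b * (y1 - y2)" by algebra
  define k where "k = (if x1 = x2 then a / (y1 - y2) else b / (x2 - x1))"
  have "a = k * (y1 - y2) \<and> b = k * (x2 - x1)"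
    using cross assms(1) by (auto simp: k_def P Q field_simps)
  moreover from this have "c = k * (x1 * y2 - x2 * y1)" using on_line(1) by algebra
  ultimately show thesis using that by (simp add: P Q)
qed

lemma lin_proportional:
  assumes "P \<noteq> Q" and "(a, b, c) \<noteq> (0, 0, 0)" and "(a', b', c') \<noteq> (0, 0, 0)"
    and "affine_eval 1 (lin a b c) P = 0" and "affine_eval 1 (lin a b c) Q = 0"
    and "affine_eval 1 (lin a' b' c') P = 0" and "affine_eval 1 (lin a' b' c') Q = 0"
  obtains k where "k \<noteq> 0" and "lin a b c = (\<lambda>t. k * lin a' b' c' t)"
proof -
  obtain k k' where k: "lin a b c = lin (k * (snd P - snd Q)) (k * (fst Q - fst P))
                                  (k * (fst P * snd Q - fst Q * snd P))"
    and k': "lin a' b' c' = lin (k' * (snd P - snd Q)) (k' * (fst Q - fst P))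
                                  (k' * (fst P * snd Q - fst Q * snd P))"
    using lin_through_two_points assms by metis
  have "k \<noteq> 0" "k' \<noteq> 0" using assms(2,3) k k' by (auto simp: lin_eq_lin_iff)
  moreover have "lin a b c = (\<lambda>t. k / k' * lin a' b' c' t)"
    unfolding k k' mult_lin using \<open>k' \<noteq> 0\<close> by (simp add: lin_eq_lin_iff)
  ultimately show thesis by (intro that[of "k / k'"]) simp_all
qed

section \<open>The five points and the six lines\<close>

lemma distinct_bpts: "\<alpha> \<noteq> 0 \<Longrightarrow> \<alpha> \<noteq> 1 \<Longrightarrow> distinct (bpts \<alpha>)"
  by (auto simp: bpts_def complex_eq_iff)

lemma selfint_lin_neg_iff:
  assumes "distinct (bpts \<alpha>)" and "(a, b, c) \<noteq> (0, 0, 0)"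
  shows "selfint \<alpha> (Strict 1 (lin a b c)) < 0 \<longleftrightarrow>
    (\<exists>P\<in>set (bpts \<alpha>). \<exists>Q\<in>set (bpts \<alpha>). P \<noteq> Q \<and>
       affine_eval 1 (lin a b c) P = 0 \<and> affine_eval 1 (lin a b c) Q = 0)"
proof -
  let ?S = "{P \<in> set (bpts \<alpha>). affine_eval 1 (lin a b c) P = 0}"
  have "(\<Sum>P\<leftarrow>bpts \<alpha>. (int (mult_at 1 (lin a b c) P))\<^sup>2) =
      (\<Sum>P\<in>set (bpts \<alpha>). if affine_eval 1 (lin a b c) P = 0 then 1 else 0)"
    unfolding sum_list_distinct_conv_sum_set[OF assms(1)] mult_at_lin[OF assms(2)]
    by (intro sum.cong) auto
  also have "\<dots> = int (card ?S)"
    by (simp add: sum.inter_filter[symmetric])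
  finally have "selfint \<alpha> (Strict 1 (lin a b c)) < 0 \<longleftrightarrow> \<not> card ?S \<le> Suc 0"
    by (simp add: selfint_def not_le)
  also have "\<dots> \<longleftrightarrow> \<not> (\<forall>P\<in>?S. \<forall>Q\<in>?S. P = Q)"
    by (simp add: card_le_Suc0_iff_eq)
  finally show ?thesis by blast
qed

lemma listed_lines_eq_lin:
  assumes "\<alpha> \<noteq> 1"
  shows "\<forall>L\<in>set (listed_lines \<alpha>). \<exists>a b c. (a, b, c) \<noteq> (0, 0, 0) \<and> L = lin a b c"
  unfolding listed_lines_def using assms by (simp add: lin_eq_lin_iff)

lemma listed_lines_cover_bpts:
  assumes "\<alpha> \<noteq> 0" and "\<alpha> \<noteq> 1"
  shows "\<forall>P\<in>set (bpts \<alpha>). \<forall>Q\<in>set (bpts \<alpha>). P \<noteq> Q \<longrightarrow>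
           (\<exists>L\<in>set (listed_lines \<alpha>). affine_eval 1 L P = 0 \<and> affine_eval 1 L Q = 0)"
  unfolding bpts_def listed_lines_def list.set ball_simps bex_simps
  unfolding affine_eval_lin fst_conv snd_conv
  using assms by (simp add: algebra_simps)

lemma bpts_on_listed_lines:
  assumes "\<alpha> \<noteq> 0" and "\<alpha> \<noteq> 1"
  shows "\<forall>L\<in>set (listed_lines \<alpha>). \<exists>P\<in>set (bpts \<alpha>). \<exists>Q\<in>set (bpts \<alpha>). P \<noteq> Q \<and>
           affine_eval 1 L P = 0 \<and> affine_eval 1 L Q = 0"
  unfolding bpts_def listed_lines_def list.set ball_simps bex_simps
  unfolding affine_eval_lin fst_conv snd_conv
  using assms by (simp add: algebra_simps)

lemma negative_strict_transform_is_listed_line: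
  assumes "\<alpha> \<noteq> 0" and "\<alpha> \<noteq> 1" and irred: "irred_homog d f" and neg: "selfint \<alpha> (Strict d f) < 0"
  obtains L k where "L \<in> set (listed_lines \<alpha>)" and "k \<noteq> 0" and "d = 1" and "f = (\<lambda>t. k * L t)"
proof -
  have "d = 1"
    using selfint_nonneg_if_degree_ge_2[OF assms(1,2) irred] neg irred
    by (auto simp: irred_homog_def)
  obtain a b c where f: "f = lin a b c"
    using irred homog_1_eq_lin unfolding irred_homog_def \<open>d = 1\<close> by blast
  with irred have abc: "(a, b, c) \<noteq> (0, 0, 0)" by (simp add: irred_homog_def lin_eq_0_iff)
  from neg obtain P Q where PQ: "P \<in> set (bpts \<alpha>)" "Q \<in> set (bpts \<alpha>)" "P \<noteq> Q"
    and on_f: "affine_eval 1 (lin a b c) P = 0" "affine_eval 1 (lin a b c) Q = 0"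
    unfolding f \<open>d = 1\<close> selfint_lin_neg_iff[OF distinct_bpts[OF assms(1,2)] abc] by blast
  obtain L where L: "L \<in> set (listed_lines \<alpha>)"
    and on_L: "affine_eval 1 L P = 0" "affine_eval 1 L Q = 0"
    using listed_lines_cover_bpts[OF assms(1,2)] PQ by blast
  obtain a' b' c' where abc': "(a', b', c') \<noteq> (0, 0, 0)" and L_lin: "L = lin a' b' c'"
    using listed_lines_eq_lin[OF assms(2)] L by blast
  obtain k where "k \<noteq> 0" and "f = (\<lambda>t. k * L t)"
    using lin_proportional[OF PQ(3) abc abc' on_f on_L[unfolded L_lin]] unfolding f L_lin .
  with L \<open>d = 1\<close> that show thesis by blast
qed

lemma listed_line_strict_transform_negative:
  assumes "\<alpha> \<noteq> 0" and "\<alpha> \<noteq> 1" and L: "L \<in> set (listed_lines \<alpha>)" and "k \<noteq> 0"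
  shows "irred_homog 1 (\<lambda>t. k * L t) \<and> selfint \<alpha> (Strict 1 (\<lambda>t. k * L t)) < 0"
proof -
  obtain a b c where abc: "(a, b, c) \<noteq> (0, 0, 0)" and L_lin: "L = lin a b c"
    using listed_lines_eq_lin[OF assms(2)] L by blast
  have f_lin: "(\<lambda>t. k * L t) = lin (k * a) (k * b) (k * c)"
    and kabc: "(k * a, k * b, k * c) \<noteq> (0, 0, 0)"
    using abc \<open>k \<noteq> 0\<close> by (simp_all add: L_lin mult_lin)
  obtain P Q where PQ: "P \<in> set (bpts \<alpha>)" "Q \<in> set (bpts \<alpha>)" "P \<noteq> Q"
    and on_L: "affine_eval 1 L P = 0" "affine_eval 1 L Q = 0"
    using bpts_on_listed_lines[OF assms(1,2)] L by blast
  have "affine_eval 1 (lin (k * a) (k * b) (k * c)) R = k * affine_eval 1 L R" for R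
    unfolding L_lin affine_eval_lin by (simp add: algebra_simps)
  with on_L have "affine_eval 1 (lin (k * a) (k * b) (k * c)) P = 0"
    "affine_eval 1 (lin (k * a) (k * b) (k * c)) Q = 0" by simp_all
  with PQ have "selfint \<alpha> (Strict 1 (lin (k * a) (k * b) (k * c))) < 0"
    unfolding selfint_lin_neg_iff[OF distinct_bpts[OF assms(1,2)] kabc] by blast
  moreover have "irred_homog 1 (lin (k * a) (k * b) (k * c))"
    by (intro irred_homog_1 homog_lin) (use kabc in \<open>simp add: lin_eq_0_iff\<close>)
  ultimately show ?thesis unfolding f_lin by blast
qed

theorem lemma6p1:
  fixes \<alpha> :: complex and C :: curveY
  assumes "\<alpha> \<noteq> 0" and "\<alpha> \<noteq> 1"
  shows "(irreducible_curveY \<alpha> C \<and> selfint \<alpha> C < 0) \<longleftrightarrow>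
         ((\<exists>P\<in>set (bpts \<alpha>). C = Exc P) \<or>
          (\<exists>L\<in>set (listed_lines \<alpha>). \<exists>c::complex. c \<noteq> 0 \<and> C = Strict 1 (\<lambda>t. c * L t)))"
proof (cases C)
  case (Exc P)
  then show ?thesis by (auto simp: irreducible_curveY_def selfint_def)
next
  case (Strict d f)
  show ?thesis
  proof
    assume "irreducible_curveY \<alpha> C \<and> selfint \<alpha> C < 0"
    then obtain L k where "L \<in> set (listed_lines \<alpha>)" "k \<noteq> 0" "d = 1" "f = (\<lambda>t. k * L t)"
      using negative_strict_transform_is_listed_line[OF assms, of d f] Strict
      by (auto simp: irreducible_curveY_def)
    with Strict show "(\<exists>P\<in>set (bpts \<alpha>). C = Exc P) \<or>
        (\<exists>L\<in>set (listed_lines \<alpha>). \<exists>c. c \<noteq> 0 \<and> C = Strict 1 (\<lambda>t. c * L t))"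
      by blast
  next
    assume "(\<exists>P\<in>set (bpts \<alpha>). C = Exc P) \<or>
        (\<exists>L\<in>set (listed_lines \<alpha>). \<exists>c. c \<noteq> 0 \<and> C = Strict 1 (\<lambda>t. c * L t))"
    with Strict show "irreducible_curveY \<alpha> C \<and> selfint \<alpha> C < 0"
      using listed_line_strict_transform_negative[OF assms] by (auto simp: irreducible_curveY_def)
  qed
qed

end
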